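(* Let $K$ be a symmetric kernel function (i.e. $K(s)=K(-s)$, $\int K=1$) supported on $[-1,1]$, and let $\mathcal{K}$ be an antiderivative of $K$. Then $$\int\!\!\int\!\!\int\mathbb{1}\{s_1<s_2<s_3\}\mathrm{sgn}(s_3-2s_2+s_1)K(s_1)K(s_2)K(s_3)\,ds_1ds_2ds_3=0;$$ $$b_K:=\int\!\!\int\!\!\int\Big\{(\mathbb{1}\{s_1<s_2<s_3\}+\mathbb{1}\{s_3<s_2<s_1\})\mathrm{sgn}(s_3-2s_2+s_1)+(\mathbb{1}\{s_1<s_3<s_2\}+\mathbb{1}\{s_2<s_3<s_1\})\mathrm{sgn}(s_2-2s_3+s_1)$$ $$+(\mathbb{1}\{s_2<s_1<s_3\}+\mathbb{1}\{s_3<s_1<s_2\})\mathrm{sgn}(s_3-2s_1+s_2)\Big\}s_1K(s_1)K(s_2)K(s_3)\,ds_1ds_2ds_3$$ $$=-2\int\!\!\int K(s_1)K(s_2)\big[\mathcal{K}(2s_1-s_2)+2\mathcal{K}(2s_2-s_1)\big]s_1\,ds_1ds_2;$$ and for any $k,l\in\{1,2,3\}$, $$\int\!\!\int\!\!\int(\mathbb{1}\{s_1<s_2<s_3\}+\mathbb{1}\{s_3<s_2<s_1\})\mathrm{sgn}(s_3-2s_2+s_1)s_ks_lK(s_1)K(s_2)K(s_3)\,ds_1ds_2ds_3=0.$$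
   Context: $\mathbb{1}\{\cdot\}$ denotes the indicator function and $\mathrm{sgn}$ the sign function; all integrals are over $\mathbb{R}$ (equivalently $[-1,1]$). *)

theory Defs
  imports "HOL-Analysis.Analysis"
begin

end

(*
  Reflection s |-> -s fixes the even kernel. It maps the integrand of the first identity to
  minus its transpose under s1 <-> s3, and the integrand of the third identity to minus itself,
  so both integrals vanish.

  In b_K, the summand with middle point s3 is the summand with middle point s2 after exchanging
  s2 and s3. Integrating the outer point s3 out first, a summand with middle point a and other
  point b contributes 1{b < a} + cdf a - 2 cdf (2a - b) off the null diagonal a = b, where cdf is
  the distribution function of K. Writing the antiderivative as cdf + c, the terms in 2 s1 - s2 and
  2 s2 - s1 give the right-hand side. For the remainder E s1 s2, the integral of E s1 s2 * K s2
  over s2 does not depend on s1, so the remainder is killed by the vanishing first moment of K.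
  All changes of integration order are justified by dominating the integrands by a constant
  times |K s1 * K s2 * K s3|; the support condition makes s1 * K s1 dominated by |K s1|.
*)

theory Submission
  imports Defs
begin

section \<open>Integrands dominated by products of the kernel\<close>

locale integrable_kernel =
  fixes K :: "real \<Rightarrow> real"
  assumes K_integrable: "integrable lborel K"
begin

lemma K_measurable [measurable]: "K \<in> borel_measurable borel"
  using borel_measurable_integrable[OF K_integrable] by simp

definition dominated1 :: "(real \<Rightarrow> real) \<Rightarrow> bool" where
  "dominated1 f \<longleftrightarrow> f \<in> borel_measurable borel \<and> (\<exists>C. \<forall>x. \<bar>f x\<bar> \<le> C * \<bar>K x\<bar>)"

definition dominated2 :: "(real \<Rightarrow> real \<Rightarrow> real) \<Rightarrow> bool" where
  "dominated2 g \<longleftrightarrow> (\<lambda>(x,y). g x y) \<in> borel_measurable (lborel \<Otimes>\<^sub>M lborel)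
     \<and> (\<exists>C. \<forall>x y. \<bar>g x y\<bar> \<le> C * \<bar>K x\<bar> * \<bar>K y\<bar>)"

definition dominated3 :: "(real \<Rightarrow> real \<Rightarrow> real \<Rightarrow> real) \<Rightarrow> bool" where
  "dominated3 h \<longleftrightarrow> (\<lambda>(x,y,z). h x y z) \<in> borel_measurable (lborel \<Otimes>\<^sub>M (lborel \<Otimes>\<^sub>M lborel))
     \<and> (\<exists>C. \<forall>x y z. \<bar>h x y z\<bar> \<le> C * \<bar>K x\<bar> * \<bar>K y\<bar> * \<bar>K z\<bar>)"

lemma dominated1I:
  assumes "f \<in> borel_measurable borel" and "\<And>x. \<bar>f x\<bar> \<le> C * \<bar>K x\<bar>"
  shows "dominated1 f"
  using assms unfolding dominated1_def by blast

lemma dominated2I: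
  assumes "(\<lambda>(x,y). g x y) \<in> borel_measurable (lborel \<Otimes>\<^sub>M lborel)"
    and "\<And>x y. \<bar>g x y\<bar> \<le> C * \<bar>K x\<bar> * \<bar>K y\<bar>"
  shows "dominated2 g"
  using assms unfolding dominated2_def by blast

lemma dominated3I:
  assumes "(\<lambda>(x,y,z). h x y z) \<in> borel_measurable (lborel \<Otimes>\<^sub>M (lborel \<Otimes>\<^sub>M lborel))"
    and "\<And>x y z. \<bar>h x y z\<bar> \<le> C * \<bar>K x\<bar> * \<bar>K y\<bar> * \<bar>K z\<bar>"
  shows "dominated3 h"
  using assms unfolding dominated3_def by blast

lemma integrable_dominated1:
  assumes "dominated1 f"
  shows "integrable lborel f"
proof -
  from assms obtain C where m: "f \<in> borel_measurable borel" and b: "\<And>x. \<bar>f x\<bar> \<le> C * \<bar>K x\<bar>"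
    unfolding dominated1_def by auto
  show ?thesis
    by (rule Bochner_Integration.integrable_bound[of _ "\<lambda>x. C * \<bar>K x\<bar>"])
       (use K_integrable m b in \<open>auto intro!: AE_I2 order_trans[OF _ abs_ge_self]\<close>)
qed

lemma integrable_abs_K_product: "integrable (lborel \<Otimes>\<^sub>M lborel) (\<lambda>(x,y). \<bar>K x\<bar> * \<bar>K y\<bar>)"
proof (rule lborel_pair.Fubini_integrable)
  show "(\<lambda>(x,y). \<bar>K x\<bar> * \<bar>K y\<bar>) \<in> borel_measurable (lborel \<Otimes>\<^sub>M lborel)"
    by measurable
  have "(\<lambda>x. LBINT y. norm (\<bar>K x\<bar> * \<bar>K y\<bar>)) = (\<lambda>x. \<bar>K x\<bar> * (LBINT y. \<bar>K y\<bar>))"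
    by (simp add: abs_mult)
  then show "integrable lborel (\<lambda>x. LBINT y. norm (case (x, y) of (x, y) \<Rightarrow> \<bar>K x\<bar> * \<bar>K y\<bar>))"
    using K_integrable by simp
  show "AE x in lborel. integrable lborel (\<lambda>y. case (x, y) of (x, y) \<Rightarrow> \<bar>K x\<bar> * \<bar>K y\<bar>)"
    using K_integrable by simp
qed

lemma integrable_dominated2:
  assumes "dominated2 g"
  shows "integrable (lborel \<Otimes>\<^sub>M lborel) (\<lambda>(x,y). g x y)"
proof -
  obtain C where m: "(\<lambda>(x,y). g x y) \<in> borel_measurable (lborel \<Otimes>\<^sub>M lborel)"
    and b: "\<And>x y. \<bar>g x y\<bar> \<le> C * \<bar>K x\<bar> * \<bar>K y\<bar>"
    using assms unfolding dominated2_def by auto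
  show ?thesis
  proof (rule Bochner_Integration.integrable_bound)
    show "integrable (lborel \<Otimes>\<^sub>M lborel) (\<lambda>p. C * (case p of (x,y) \<Rightarrow> \<bar>K x\<bar> * \<bar>K y\<bar>))"
      by (rule integrable_mult_right) (rule integrable_abs_K_product)
  qed (use m b in \<open>auto intro!: AE_I2 order_trans[OF _ abs_ge_self] simp: mult.assoc split: prod.splits\<close>)
qed

lemma dominated2_integral_swap:
  assumes "dominated2 g"
  shows "(LBINT y. LBINT x. g x y) = (LBINT x. LBINT y. g x y)"
  using lborel_pair.Fubini_integral[OF integrable_dominated2[OF assms]] by simp

lemma integrable_dominated2_section:
  assumes "dominated2 g"
  shows "integrable lborel (\<lambda>x. g x y)"
proof -
  obtain C where m: "(\<lambda>(x,y). g x y) \<in> borel_measurable (lborel \<Otimes>\<^sub>M lborel)"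
    and b: "\<And>x y. \<bar>g x y\<bar> \<le> C * \<bar>K x\<bar> * \<bar>K y\<bar>"
    using assms unfolding dominated2_def by auto
  have "(\<lambda>x. g x y) \<in> borel_measurable borel"
    using measurable_compose[OF _ m, of "\<lambda>x. (x,y)" borel] by (simp add: measurable_Pair)
  moreover have "\<bar>g x y\<bar> \<le> (C * \<bar>K y\<bar>) * \<bar>K x\<bar>" for x
    using b[of x y] by (simp add: ac_simps)
  ultimately show ?thesis
    by (rule integrable_dominated1[OF dominated1I])
qed

lemma abs_integral_le_abs_K_integral:
  assumes "integrable lborel f" and "\<And>x. \<bar>f x\<bar> \<le> C * \<bar>K x\<bar>"
  shows "\<bar>LBINT x. f x\<bar> \<le> C * (LBINT x. \<bar>K x\<bar>)"
proof -
  have "\<bar>LBINT x. f x\<bar> \<le> (LBINT x. \<bar>f x\<bar>)"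
    using integral_norm_bound[of lborel f] by simp
  also have "\<dots> \<le> (LBINT x. C * \<bar>K x\<bar>)"
    using assms K_integrable by (intro integral_mono) auto
  finally show ?thesis
    by simp
qed

lemma dominated1_integral_first:
  assumes "dominated2 g"
  shows "dominated1 (\<lambda>y. LBINT x. g x y)"
proof -
  obtain C where m: "(\<lambda>(x,y). g x y) \<in> borel_measurable (lborel \<Otimes>\<^sub>M lborel)"
    and b: "\<And>x y. \<bar>g x y\<bar> \<le> C * \<bar>K x\<bar> * \<bar>K y\<bar>"
    using assms unfolding dominated2_def by auto
  show ?thesis
  proof (rule dominated1I)
    have "(\<lambda>(y,x). g x y) \<in> borel_measurable (lborel \<Otimes>\<^sub>M lborel)"
      using measurable_compose[OF _ m, of "\<lambda>(y,x). (x,y)"] by (simp add: case_prod_beta')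
    then show "(\<lambda>y. LBINT x. g x y) \<in> borel_measurable borel"
      using lborel.borel_measurable_lebesgue_integral[of "\<lambda>y x. g x y" lborel] by simp
    fix y
    have "\<bar>g x y\<bar> \<le> (C * \<bar>K y\<bar>) * \<bar>K x\<bar>" for x
      using b[of x y] by (simp add: ac_simps)
    from abs_integral_le_abs_K_integral[OF integrable_dominated2_section[OF assms] this]
    show "\<bar>LBINT x. g x y\<bar> \<le> (C * (LBINT x. \<bar>K x\<bar>)) * \<bar>K y\<bar>"
      by (simp add: ac_simps)
  qed
qed

lemma dominated2_section:
  assumes "dominated3 h"
  shows "dominated2 (\<lambda>x y. h x y z)"
proof -
  obtain C where m: "(\<lambda>(x,y,z). h x y z) \<in> borel_measurable (lborel \<Otimes>\<^sub>M (lborel \<Otimes>\<^sub>M lborel))"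
    and b: "\<And>x y z. \<bar>h x y z\<bar> \<le> C * \<bar>K x\<bar> * \<bar>K y\<bar> * \<bar>K z\<bar>"
    using assms unfolding dominated3_def by auto
  show ?thesis
  proof (rule dominated2I)
    show "(\<lambda>(x,y). h x y z) \<in> borel_measurable (lborel \<Otimes>\<^sub>M lborel)"
      using measurable_compose[OF _ m, of "\<lambda>(x,y). (x,y,z)"] by (simp add: case_prod_beta')
    show "\<bar>h x y z\<bar> \<le> (C * \<bar>K z\<bar>) * \<bar>K x\<bar> * \<bar>K y\<bar>" for x y
      using b[of x y z] by (simp add: ac_simps)
  qed
qed

lemma dominated2_integral_first:
  assumes "dominated3 h"
  shows "dominated2 (\<lambda>y z. LBINT x. h x y z)"
proof -
  obtain C where m: "(\<lambda>(x,y,z). h x y z) \<in> borel_measurable (lborel \<Otimes>\<^sub>M (lborel \<Otimes>\<^sub>M lborel))"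
    and b: "\<And>x y z. \<bar>h x y z\<bar> \<le> C * \<bar>K x\<bar> * \<bar>K y\<bar> * \<bar>K z\<bar>"
    using assms unfolding dominated3_def by auto
  show ?thesis
  proof (rule dominated2I)
    have "(\<lambda>((y,z),x). h x y z) \<in> borel_measurable ((lborel \<Otimes>\<^sub>M lborel) \<Otimes>\<^sub>M lborel)"
      using measurable_compose[OF _ m, of "\<lambda>((y,z),x). (x,y,z)"] by (simp add: case_prod_beta')
    then show "(\<lambda>(y,z). LBINT x. h x y z) \<in> borel_measurable (lborel \<Otimes>\<^sub>M lborel)"
      using lborel.borel_measurable_lebesgue_integral[of "\<lambda>(y,z) x. h x y z" "lborel \<Otimes>\<^sub>M lborel"]
      by (simp add: case_prod_beta')
    fix y z
    have "\<bar>h x y z\<bar> \<le> (C * \<bar>K y\<bar> * \<bar>K z\<bar>) * \<bar>K x\<bar>" for x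
      using b[of x y z] by (simp add: ac_simps)
    from abs_integral_le_abs_K_integral[OF integrable_dominated2_section[OF dominated2_section[OF assms]] this]
    show "\<bar>LBINT x. h x y z\<bar> \<le> (C * (LBINT x. \<bar>K x\<bar>)) * \<bar>K y\<bar> * \<bar>K z\<bar>"
      by (simp add: ac_simps)
  qed
qed

lemma dominated3_swap12:
  assumes "dominated3 h"
  shows "dominated3 (\<lambda>x y z. h y x z)"
proof -
  obtain C where m: "(\<lambda>(x,y,z). h x y z) \<in> borel_measurable (lborel \<Otimes>\<^sub>M (lborel \<Otimes>\<^sub>M lborel))"
    and b: "\<And>x y z. \<bar>h x y z\<bar> \<le> C * \<bar>K x\<bar> * \<bar>K y\<bar> * \<bar>K z\<bar>"
    using assms unfolding dominated3_def by auto
  show ?thesis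
  proof (rule dominated3I)
    show "(\<lambda>(x,y,z). h y x z) \<in> borel_measurable (lborel \<Otimes>\<^sub>M (lborel \<Otimes>\<^sub>M lborel))"
      using measurable_compose[OF _ m, of "\<lambda>(x,y,z). (y,x,z)"] by (simp add: case_prod_beta')
    show "\<bar>h y x z\<bar> \<le> C * \<bar>K x\<bar> * \<bar>K y\<bar> * \<bar>K z\<bar>" for x y z
      using b[of y x z] by (simp add: ac_simps)
  qed
qed

lemma dominated3_swap23:
  assumes "dominated3 h"
  shows "dominated3 (\<lambda>x y z. h x z y)"
proof -
  obtain C where m: "(\<lambda>(x,y,z). h x y z) \<in> borel_measurable (lborel \<Otimes>\<^sub>M (lborel \<Otimes>\<^sub>M lborel))"
    and b: "\<And>x y z. \<bar>h x y z\<bar> \<le> C * \<bar>K x\<bar> * \<bar>K y\<bar> * \<bar>K z\<bar>"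
    using assms unfolding dominated3_def by auto
  show ?thesis
  proof (rule dominated3I)
    show "(\<lambda>(x,y,z). h x z y) \<in> borel_measurable (lborel \<Otimes>\<^sub>M (lborel \<Otimes>\<^sub>M lborel))"
      using measurable_compose[OF _ m, of "\<lambda>(x,y,z). (x,z,y)"] by (simp add: case_prod_beta')
    show "\<bar>h x z y\<bar> \<le> C * \<bar>K x\<bar> * \<bar>K y\<bar> * \<bar>K z\<bar>" for x y z
      using b[of x z y] by (simp add: ac_simps)
  qed
qed

lemma triple_integral_swap12:
  assumes "dominated3 h"
  shows "(LBINT z. LBINT y. LBINT x. h x y z) = (LBINT z. LBINT y. LBINT x. h y x z)"
  by (rule Bochner_Integration.integral_cong[OF refl])
     (rule dominated2_integral_swap[OF dominated2_section[OF assms]])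

lemma triple_integral_swap23:
  assumes "dominated3 h"
  shows "(LBINT z. LBINT y. LBINT x. h x y z) = (LBINT z. LBINT y. LBINT x. h x z y)"
  by (rule dominated2_integral_swap[OF dominated2_integral_first[OF assms]])

lemma triple_integral_swap13:
  assumes "dominated3 h"
  shows "(LBINT z. LBINT y. LBINT x. h x y z) = (LBINT z. LBINT y. LBINT x. h z y x)"
  using triple_integral_swap12[OF assms] triple_integral_swap23[OF dominated3_swap12[OF assms]]
    triple_integral_swap12[OF dominated3_swap23[OF dominated3_swap12[OF assms]]]
  by simp

lemma triple_integral_last_innermost:
  assumes "dominated3 h"
  shows "(LBINT z. LBINT y. LBINT x. h x y z) = (LBINT y. LBINT x. LBINT z. h x y z)"
  using triple_integral_swap23[OF assms] triple_integral_swap12[OF dominated3_swap23[OF assms]]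
  by simp

lemma dominated1_bounded_factor:
  assumes "c \<in> borel_measurable borel" and "\<And>x. \<bar>c x\<bar> \<le> C"
  shows "dominated1 (\<lambda>x. c x * K x)"
proof (rule dominated1I)
  show "(\<lambda>x. c x * K x) \<in> borel_measurable borel"
    using assms(1) by measurable
  show "\<bar>c x * K x\<bar> \<le> C * \<bar>K x\<bar>" for x
    using assms(2)[of x] by (simp add: abs_mult mult_right_mono)
qed

lemma integrable_bounded_times_K:
  assumes "c \<in> borel_measurable borel" and "\<And>x. \<bar>c x\<bar> \<le> C"
  shows "integrable lborel (\<lambda>x. c x * K x)"
  by (rule integrable_dominated1[OF dominated1_bounded_factor[OF assms]])

lemma integrable_of_bool_times_K:
  assumes "Measurable.pred borel P"
  shows "integrable lborel (\<lambda>t. of_bool (P t) * K t)"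
  using assms by (intro integrable_bounded_times_K[where C=1]) auto

lemma dominated2_bounded_factor:
  assumes "(\<lambda>(x,y). c x y) \<in> borel_measurable (lborel \<Otimes>\<^sub>M lborel)"
    and "\<And>x y. K x \<noteq> 0 \<Longrightarrow> K y \<noteq> 0 \<Longrightarrow> \<bar>c x y\<bar> \<le> C"
  shows "dominated2 (\<lambda>x y. c x y * K x * K y)"
proof (rule dominated2I)
  show "(\<lambda>(x,y). c x y * K x * K y) \<in> borel_measurable (lborel \<Otimes>\<^sub>M lborel)"
    using assms(1) by measurable
  show "\<bar>c x y * K x * K y\<bar> \<le> C * \<bar>K x\<bar> * \<bar>K y\<bar>" for x y
  proof (cases "K x = 0 \<or> K y = 0")
    case False
    then have "\<bar>c x y\<bar> * (\<bar>K x\<bar> * \<bar>K y\<bar>) \<le> C * (\<bar>K x\<bar> * \<bar>K y\<bar>)"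
      using assms(2) by (intro mult_right_mono) auto
    then show ?thesis
      by (simp add: abs_mult mult.assoc)
  qed auto
qed

lemma dominated3_bounded_factor:
  assumes "(\<lambda>(x,y,z). c x y z) \<in> borel_measurable (lborel \<Otimes>\<^sub>M (lborel \<Otimes>\<^sub>M lborel))"
    and "\<And>x y z. K x \<noteq> 0 \<Longrightarrow> K y \<noteq> 0 \<Longrightarrow> K z \<noteq> 0 \<Longrightarrow> \<bar>c x y z\<bar> \<le> C"
  shows "dominated3 (\<lambda>x y z. c x y z * K x * K y * K z)"
proof (rule dominated3I)
  have "(\<lambda>p. (\<lambda>(x,y,z). c x y z) p * (\<lambda>(x,y,z). K x * K y * K z) p)
      \<in> borel_measurable (lborel \<Otimes>\<^sub>M (lborel \<Otimes>\<^sub>M lborel))"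
    using assms(1) by measurable
  then show "(\<lambda>(x,y,z). c x y z * K x * K y * K z) \<in> borel_measurable (lborel \<Otimes>\<^sub>M (lborel \<Otimes>\<^sub>M lborel))"
    by (simp add: case_prod_beta' mult.assoc)
  show "\<bar>c x y z * K x * K y * K z\<bar> \<le> C * \<bar>K x\<bar> * \<bar>K y\<bar> * \<bar>K z\<bar>" for x y z
  proof (cases "K x = 0 \<or> K y = 0 \<or> K z = 0")
    case False
    then have "\<bar>c x y z\<bar> * (\<bar>K x\<bar> * \<bar>K y\<bar> * \<bar>K z\<bar>) \<le> C * (\<bar>K x\<bar> * \<bar>K y\<bar> * \<bar>K z\<bar>)"
      using assms(2) by (intro mult_right_mono) auto
    then show ?thesis
      by (simp add: abs_mult mult.assoc)
  qed auto
qed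

lemma dominated3_add:
  assumes "dominated3 h1" and "dominated3 h2"
  shows "dominated3 (\<lambda>x y z. h1 x y z + h2 x y z)"
proof -
  obtain C1 where m1: "(\<lambda>(x,y,z). h1 x y z) \<in> borel_measurable (lborel \<Otimes>\<^sub>M (lborel \<Otimes>\<^sub>M lborel))"
    and b1: "\<And>x y z. \<bar>h1 x y z\<bar> \<le> C1 * \<bar>K x\<bar> * \<bar>K y\<bar> * \<bar>K z\<bar>"
    using assms(1) unfolding dominated3_def by auto
  obtain C2 where m2: "(\<lambda>(x,y,z). h2 x y z) \<in> borel_measurable (lborel \<Otimes>\<^sub>M (lborel \<Otimes>\<^sub>M lborel))"
    and b2: "\<And>x y z. \<bar>h2 x y z\<bar> \<le> C2 * \<bar>K x\<bar> * \<bar>K y\<bar> * \<bar>K z\<bar>"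
    using assms(2) unfolding dominated3_def by auto
  show ?thesis
  proof (rule dominated3I)
    have "(\<lambda>p. (\<lambda>(x,y,z). h1 x y z) p + (\<lambda>(x,y,z). h2 x y z) p)
        \<in> borel_measurable (lborel \<Otimes>\<^sub>M (lborel \<Otimes>\<^sub>M lborel))"
      using m1 m2 by measurable
    then show "(\<lambda>(x,y,z). h1 x y z + h2 x y z) \<in> borel_measurable (lborel \<Otimes>\<^sub>M (lborel \<Otimes>\<^sub>M lborel))"
      by (simp add: case_prod_beta')
    show "\<bar>h1 x y z + h2 x y z\<bar> \<le> (C1 + C2) * \<bar>K x\<bar> * \<bar>K y\<bar> * \<bar>K z\<bar>" for x y z
      using abs_triangle_ineq[of "h1 x y z" "h2 x y z"] b1[of x y z] b2[of x y z]
      by (simp add: algebra_simps)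
  qed
qed

lemma double_integral_add:
  assumes "dominated2 g1" and "dominated2 g2"
  shows "(LBINT y. LBINT x. g1 x y + g2 x y) = (LBINT y. LBINT x. g1 x y) + (LBINT y. LBINT x. g2 x y)"
proof -
  have "(LBINT y. LBINT x. g1 x y + g2 x y) = (LBINT y. (LBINT x. g1 x y) + (LBINT x. g2 x y))"
    using assms by (intro Bochner_Integration.integral_cong Bochner_Integration.integral_add
        integrable_dominated2_section) auto
  also have "\<dots> = (LBINT y. LBINT x. g1 x y) + (LBINT y. LBINT x. g2 x y)"
    using assms by (intro Bochner_Integration.integral_add integrable_dominated1
        dominated1_integral_first)
  finally show ?thesis .
qed

lemma triple_integral_add:
  assumes "dominated3 h1" and "dominated3 h2"
  shows "(LBINT z. LBINT y. LBINT x. h1 x y z + h2 x y z)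
    = (LBINT z. LBINT y. LBINT x. h1 x y z) + (LBINT z. LBINT y. LBINT x. h2 x y z)"
proof -
  have "(LBINT z. LBINT y. LBINT x. h1 x y z + h2 x y z)
      = (LBINT z. (LBINT y. LBINT x. h1 x y z) + (LBINT y. LBINT x. h2 x y z))"
    using assms by (intro Bochner_Integration.integral_cong double_integral_add dominated2_section) auto
  also have "\<dots> = (LBINT z. LBINT y. LBINT x. h1 x y z) + (LBINT z. LBINT y. LBINT x. h2 x y z)"
    using assms by (intro Bochner_Integration.integral_add integrable_dominated1
        dominated1_integral_first dominated2_integral_first)
  finally show ?thesis .
qed

lemma triple_integral_add_swap23:
  assumes "dominated3 f" and "dominated3 g"
  shows "(LBINT z. LBINT y. LBINT x. f x y z + g x z y) = (LBINT z. LBINT y. LBINT x. f x y z + g x y z)"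
  using triple_integral_add[OF assms(1) dominated3_swap23[OF assms(2)]] triple_integral_add[OF assms]
    triple_integral_swap23[OF assms(2)]
  by simp

lemma triple_integral_innermost_AE:
  assumes "dominated3 h"
    and "\<And>y. (\<lambda>x. g x y) \<in> borel_measurable borel"
    and "\<And>y. AE x in lborel. (LBINT z. h x y z) = g x y"
  shows "(LBINT z. LBINT y. LBINT x. h x y z) = (LBINT y. LBINT x. g x y)"
proof -
  have "dominated2 (\<lambda>x y. LBINT z. h x y z)"
    using dominated2_integral_first[OF dominated3_swap12[OF dominated3_swap23[OF assms(1)]]] .
  then have "(\<lambda>x. LBINT z. h x y z) \<in> borel_measurable borel" for y
    using borel_measurable_integrable[OF integrable_dominated2_section] by simp
  then have "(LBINT x. LBINT z. h x y z) = (LBINT x. g x y)" for y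
    using assms(2,3) by (intro integral_cong_AE) auto
  then show ?thesis
    unfolding triple_integral_last_innermost[OF assms(1)] by simp
qed

end

section \<open>Odd integrands\<close>

lemma lborel_integral_reflect: "(LBINT x. f x) = (LBINT x. f (- x))"
  for f :: "real \<Rightarrow> real"
  using lborel_integral_real_affine[of "-1" f 0] by simp

lemma triple_integral_reflect:
  "(LBINT z. LBINT y. LBINT x. h x y z) = (LBINT z. LBINT y. LBINT x. h (- x) (- y) (- z))"
  for h :: "real \<Rightarrow> real \<Rightarrow> real \<Rightarrow> real"
  by (subst lborel_integral_reflect, rule Bochner_Integration.integral_cong[OF refl],
      subst lborel_integral_reflect, rule Bochner_Integration.integral_cong[OF refl],
      subst lborel_integral_reflect, rule refl)

lemma triple_integral_odd_eq_0:
  fixes h :: "real \<Rightarrow> real \<Rightarrow> real \<Rightarrow> real"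
  assumes "\<And>x y z. h (- x) (- y) (- z) = - h x y z"
  shows "(LBINT z. LBINT y. LBINT x. h x y z) = 0"
  using triple_integral_reflect[of h] by (simp add: assms)

lemma (in integrable_kernel) ordered_sgn_integral_eq_0:
  assumes K_sym: "\<And>s. K (- s) = K s"
  shows "(LBINT (s3::real). LBINT (s2::real). LBINT (s1::real).
        of_bool (s1 < s2 \<and> s2 < s3) * sgn (s3 - 2 *  s2 + s1) * K s1 * K s2 * K s3) = 0"
proof -
  define h where "h s1 s2 s3 = of_bool (s1 < s2 \<and> s2 < s3) * sgn (s3 - 2 * s2 + s1) * K s1 * K s2 * K s3"
    for s1 s2 s3
  have "dominated3 h"
    unfolding h_def[abs_def] by (rule dominated3_bounded_factor[where C=1]) (auto simp: sgn_real_def)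
  have "h (- x) (- y) (- z) = - h z y x" for x y z
    unfolding h_def using sgn_minus[of "x - 2 * y + z"] by (simp add: K_sym conj_commute algebra_simps)
  then have "(LBINT z. LBINT y. LBINT x. h x y z) = - (LBINT z. LBINT y. LBINT x. h z y x)"
    using triple_integral_reflect[of h] by simp
  then show ?thesis
    using triple_integral_swap13[OF \<open>dominated3 h\<close>] unfolding h_def by simp
qed

lemma ordered_sgn_second_moment_integral_eq_0:
  fixes K :: "real \<Rightarrow> real"
  assumes K_sym: "\<And>s. K (- s) = K s" and "k \<in> {1::nat,2,3}" and "l \<in> {1::nat,2,3}"
  shows "(LBINT (s3::real). LBINT (s2::real). LBINT (s1::real).
        (of_bool (s1 < s2 \<and> s2 < s3) + of_bool (s3 < s2 \<and> s2 < s1)) * sgn (s3 - 2 *  s2 + s1)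
        * ([s1,s2,s3] ! (k - 1)) * ([s1,s2,s3] ! (l - 1)) * K s1 * K s2 * K s3) = 0"
proof (rule triple_integral_odd_eq_0)
  fix x y z :: real
  have "[- x, - y, - z] ! (i - 1) = - ([x, y, z] ! (i - 1))" if "i \<in> {1::nat,2,3}" for i
    using that by auto
  then show "(of_bool (- x < - y \<and> - y < - z) + of_bool (- z < - y \<and> - y < - x)) * sgn (- z - 2 * - y + - x)
      * [- x, - y, - z] ! (k - 1) * [- x, - y, - z] ! (l - 1) * K (- x) * K (- y) * K (- z)
    = - ((of_bool (x < y \<and> y < z) + of_bool (z < y \<and> y < x)) * sgn (z - 2 * y + x)
      * [x, y, z] ! (k - 1) * [x, y, z] ! (l - 1) * K x * K y * K z)"
    using assms(2,3) sgn_minus[of "z - 2 * y + x"] by (simp add: K_sym conj_commute add.commute)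
qed

section \<open>The distribution function of the kernel\<close>

text \<open>The three summands of \<open>b\<^sub>K\<close> are \<open>mid_sgn s2 s1 s3\<close>, \<open>mid_sgn s3 s1 s2\<close> and
  \<open>mid_sgn s1 s2 s3\<close>.\<close>

definition mid_sgn :: "real \<Rightarrow> real \<Rightarrow> real \<Rightarrow> real" where
  "mid_sgn a b c = (of_bool (b < a \<and> a < c) + of_bool (c < a \<and> a < b)) * sgn (b + c - 2 * a)"

lemma abs_mid_sgn_le_1: "\<bar>mid_sgn a b c\<bar> \<le> 1"
  unfolding mid_sgn_def by (auto simp: abs_mult abs_sgn_eq)

lemma measurable_mid_sgn [measurable]:
  assumes [measurable]: "f \<in> borel_measurable M" "g \<in> borel_measurable M" "h \<in> borel_measurable M"
  shows "(\<lambda>x. mid_sgn (f x) (g x) (h x)) \<in> borel_measurable M"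
  unfolding mid_sgn_def by measurable

locale kernel = integrable_kernel +
  assumes K_integral_1: "(LBINT s. K s) = 1"
begin

definition cdf :: "real \<Rightarrow> real" where
  "cdf a = (LBINT t. of_bool (t < a) * K t)"

lemma cdf_measurable [measurable]: "cdf \<in> borel_measurable borel"
proof -
  have "(\<lambda>a. LBINT t. of_bool (t < a) * K t) \<in> borel_measurable lborel"
    by (rule lborel.borel_measurable_lebesgue_integral) measurable
  then show ?thesis
    unfolding cdf_def[abs_def] by simp
qed

lemma abs_cdf_le: "\<bar>cdf a\<bar> \<le> (LBINT t. \<bar>K t\<bar>)"
  using abs_integral_le_abs_K_integral[OF integrable_of_bool_times_K, of "\<lambda>t. t < a" 1]
  unfolding cdf_def by simp

lemma integral_le_eq_cdf: "(LBINT t. of_bool (t \<le> a) * K t) = cdf a"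
  unfolding cdf_def
  by (rule integral_cong_AE) (use AE_lborel_singleton[of a] in \<open>auto elim!: eventually_mono\<close>)

lemma integral_greater_eq_cdf: "(LBINT t. of_bool (a < t) * K t) = 1 - cdf a"
proof -
  have "(LBINT t. of_bool (a < t) * K t) = (LBINT t. K t - of_bool (t \<le> a) * K t)"
    by (rule Bochner_Integration.integral_cong) auto
  also have "\<dots> = (LBINT t. K t) - (LBINT t. of_bool (t \<le> a) * K t)"
    using K_integrable integrable_of_bool_times_K by (intro Bochner_Integration.integral_diff) auto
  finally show ?thesis
    using K_integral_1 integral_le_eq_cdf by simp
qed

lemma integral_between_eq_cdf:
  assumes "b < a"
  shows "(LBINT t. of_bool (b < t \<and> t < a) * K t) = cdf a - cdf b"
proof -
  have "(LBINT t. of_bool (b < t \<and> t < a) * K t) = (LBINT t. of_bool (t < a) * K t - of_bool (t \<le> b) * K t)"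
    using assms by (intro Bochner_Integration.integral_cong) auto
  also have "\<dots> = (LBINT t. of_bool (t < a) * K t) - (LBINT t. of_bool (t \<le> b) * K t)"
    using integrable_of_bool_times_K by (intro Bochner_Integration.integral_diff) auto
  finally show ?thesis
    using integral_le_eq_cdf unfolding cdf_def by simp
qed

lemma integral_sgn_above:
  assumes "a < r"
  shows "(LBINT z. of_bool (a < z) * sgn (z - r) * K z) = 1 + cdf a - 2 * cdf r"
proof -
  have "(LBINT z. of_bool (a < z) * sgn (z - r) * K z)
      = (LBINT t. of_bool (r < t) * K t - of_bool (a < t \<and> t < r) * K t)"
    using assms by (intro Bochner_Integration.integral_cong) (auto simp: sgn_real_def)
  also have "\<dots> = (LBINT t. of_bool (r < t) * K t) - (LBINT t. of_bool (a < t \<and> t < r) * K t)"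
    using integrable_of_bool_times_K by (intro Bochner_Integration.integral_diff) auto
  finally show ?thesis
    using integral_greater_eq_cdf integral_between_eq_cdf[OF assms] by simp
qed

lemma integral_sgn_below:
  assumes "r < a"
  shows "(LBINT z. of_bool (z < a) * sgn (z - r) * K z) = cdf a - 2 * cdf r"
proof -
  have "(LBINT z. of_bool (z < a) * sgn (z - r) * K z)
      = (LBINT t. of_bool (r < t \<and> t < a) * K t - of_bool (t < r) * K t)"
    using assms by (intro Bochner_Integration.integral_cong) (auto simp: sgn_real_def)
  also have "\<dots> = (LBINT t. of_bool (r < t \<and> t < a) * K t) - (LBINT t. of_bool (t < r) * K t)"
    using integrable_of_bool_times_K by (intro Bochner_Integration.integral_diff) auto
  finally show ?thesis
    using integral_between_eq_cdf[OF assms] unfolding cdf_def by simp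
qed

lemma integral_mid_sgn:
  assumes "a \<noteq> b"
  shows "(LBINT z. mid_sgn a b z * K z) = of_bool (b < a) + cdf a - 2 * cdf (2 * a - b)"
proof (cases "b < a")
  case True
  have "(LBINT z. mid_sgn a b z * K z) = (LBINT z. of_bool (a < z) * sgn (z - (2 * a - b)) * K z)"
    using True by (intro Bochner_Integration.integral_cong) (auto simp: mid_sgn_def algebra_simps)
  also have "\<dots> = 1 + cdf a - 2 * cdf (2 * a - b)"
    using True by (intro integral_sgn_above) simp
  finally show ?thesis
    using True by simp
next
  case False
  then have "a < b"
    using assms by simp
  have "(LBINT z. mid_sgn a b z * K z) = (LBINT z. of_bool (z < a) * sgn (z - (2 * a - b)) * K z)"
    using \<open>a < b\<close> by (intro Bochner_Integration.integral_cong) (auto simp: mid_sgn_def algebra_simps)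
  also have "\<dots> = cdf a - 2 * cdf (2 * a - b)"
    using \<open>a < b\<close> by (intro integral_sgn_below) simp
  finally show ?thesis
    using False by simp
qed

lemma integral_mid_sgn_pair:
  assumes "x \<noteq> y"
  shows "(LBINT z. (2 * mid_sgn y x z + mid_sgn x y z) * K z)
    = 2 * (of_bool (x < y) + cdf y - 2 * cdf (2 * y - x)) + (of_bool (y < x) + cdf x - 2 * cdf (2 * x - y))"
proof -
  have "integrable lborel (\<lambda>z. mid_sgn a b z * K z)" for a b
    using abs_mid_sgn_le_1 by (intro integrable_bounded_times_K[where C=1]) auto
  then have "(LBINT z. (2 * mid_sgn y x z + mid_sgn x y z) * K z)
      = 2 * (LBINT z. mid_sgn y x z * K z) + (LBINT z. mid_sgn x y z * K z)"
    by (simp add: distrib_right mult.assoc)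
  then show ?thesis
    using assms by (simp add: integral_mid_sgn)
qed

lemma antiderivative_eq_cdf_plus_const:
  fixes KK :: "real \<Rightarrow> real"
  assumes "\<And>x y. x \<le> y \<Longrightarrow> KK y - KK x = (LBINT t=x..y. K t)"
  shows "KK = (\<lambda>x. cdf x + (KK 0 - cdf 0))"
proof -
  have "KK y - KK x = cdf y - cdf x" if "x \<le> y" for x y
  proof (cases "x = y")
    case False
    then have "x < y"
      using that by simp
    have "KK y - KK x = (LBINT t. indicator {x<..<y} t * K t)"
      using assms[OF that] that
      by (simp add: interval_lebesgue_integral_le_eq set_lebesgue_integral_def)
    also have "\<dots> = (LBINT t. of_bool (x < t \<and> t < y) * K t)"
      by (intro Bochner_Integration.integral_cong) (auto simp: indicator_def)
    finally show ?thesis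
      using integral_between_eq_cdf[OF \<open>x < y\<close>] by simp
  qed simp
  note increment = this
  show ?thesis
  proof
    show "KK x = cdf x + (KK 0 - cdf 0)" for x
      using increment[of 0 x] increment[of x 0] by (cases "0 \<le> x") auto
  qed
qed

end

section \<open>The first-moment identity\<close>

locale symmetric_kernel = kernel +
  assumes K_sym: "\<And>s. K (- s) = K s"
    and K_supp: "\<And>s. \<bar>s\<bar> > 1 \<Longrightarrow> K s = 0"
begin

lemma abs_mult_le_if_K_nonzero:
  assumes "\<bar>c\<bar> \<le> C" and "K x \<noteq> 0"
  shows "\<bar>c * x\<bar> \<le> C"
proof -
  have "\<bar>x\<bar> \<le> 1"
    using K_supp assms(2) by (meson not_le)
  then have "\<bar>c\<bar> * \<bar>x\<bar> \<le> \<bar>c\<bar>"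
    by (simp add: mult_left_le)
  then show ?thesis
    using assms(1) by (simp add: abs_mult)
qed

lemma integral_x_times_K_eq_0: "(LBINT x. x * K x) = 0"
  using lborel_integral_reflect[of "\<lambda>x. x * K x"] by (simp add: K_sym)

lemma dominated2_remainder:
  "dominated2 (\<lambda>x y. (of_bool (y < x) + 2 * of_bool (x < y) + cdf x + 2 * cdf y + e) * x * K x * K y)"
proof (rule dominated2_bounded_factor)
  show "(\<lambda>(x,y). (of_bool (y < x) + 2 * of_bool (x < y) + cdf x + 2 * cdf y + e) * x)
      \<in> borel_measurable (lborel \<Otimes>\<^sub>M lborel)"
    by measurable
  let ?L = "LBINT t. \<bar>K t\<bar>"
  show "\<bar>(of_bool (y < x) + 2 * of_bool (x < y) + cdf x + 2 * cdf y + e) * x\<bar> \<le> 3 + 3 * ?L + \<bar>e\<bar>"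
    if "K x \<noteq> 0" for x y
  proof (rule abs_mult_le_if_K_nonzero[OF _ that])
    show "\<bar>of_bool (y < x) + 2 * of_bool (x < y) + cdf x + 2 * cdf y + e\<bar> \<le> 3 + 3 * ?L + \<bar>e\<bar>"
      using abs_cdf_le[of x] abs_cdf_le[of y] by (auto simp: abs_le_iff)
  qed
qed

lemma integral_remainder_eq_0:
  "(LBINT y. LBINT x. (of_bool (y < x) + 2 * of_bool (x < y) + cdf x + 2 * cdf y + e) * x * K x * K y) = 0"
proof -
  define E where "E x y = of_bool (y < x) + 2 * of_bool (x < y) + cdf x + 2 * cdf y + e" for x y
  \<comment> \<open>The integral against \<open>K y\<close> no longer depends on \<open>x\<close>, and \<open>x * K x\<close> integrates to 0.\<close>
  have "(LBINT y. E x y * K y) = 2 + 2 * (LBINT y. cdf y * K y) + e" for x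
  proof -
    have cdf_K: "integrable lborel (\<lambda>y. cdf y * K y)"
      using abs_cdf_le by (intro integrable_bounded_times_K) auto
    have "(LBINT y. E x y * K y) = (LBINT y. of_bool (y < x) * K y + 2 * (of_bool (x < y) * K y)
        + cdf x * K y + 2 * (cdf y * K y) + e * K y)"
      unfolding E_def by (intro Bochner_Integration.integral_cong) (auto simp: algebra_simps)
    also have "\<dots> = cdf x + 2 * (1 - cdf x) + cdf x + 2 * (LBINT y. cdf y * K y) + e"
      using K_integrable cdf_K integrable_of_bool_times_K[of "\<lambda>y. y < x"]
        integrable_of_bool_times_K[of "\<lambda>y. x < y"]
      by (simp add: integral_greater_eq_cdf K_integral_1 flip: cdf_def)
    finally show ?thesis
      by simp
  qed
  then have inner: "(LBINT y. E x y * x * K x * K y) = x * K x * (2 + 2 * (LBINT y. cdf y * K y) + e)" for x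
    using integral_mult_right_zero[of lborel "x * K x" "\<lambda>y. E x y * K y"] by (simp add: ac_simps)
  have "(LBINT y. LBINT x. E x y * x * K x * K y) = (LBINT x. LBINT y. E x y * x * K x * K y)"
    using dominated2_integral_swap[OF dominated2_remainder] unfolding E_def .
  also have "\<dots> = (LBINT x. x * K x) * (2 + 2 * (LBINT y. cdf y * K y) + e)"
    by (simp only: inner integral_mult_left_zero)
  also have "\<dots> = 0"
    by (simp add: integral_x_times_K_eq_0)
  finally show ?thesis
    unfolding E_def .
qed

lemma dominated2_cdf_reflections:
  "dominated2 (\<lambda>x y. - 2 * (cdf (2 * x - y) + 2 * cdf (2 * y - x) + e) * x * K x * K y)"
proof (rule dominated2_bounded_factor)
  show "(\<lambda>(x,y). - 2 * (cdf (2 * x - y) + 2 * cdf (2 * y - x) + e) * x) \<in> borel_measurable (lborel \<Otimes>\<^sub>M lborel)"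
    by measurable
  let ?L = "LBINT t. \<bar>K t\<bar>"
  show "\<bar>- 2 * (cdf (2 * x - y) + 2 * cdf (2 * y - x) + e) * x\<bar> \<le> 6 * ?L + 2 * \<bar>e\<bar>"
    if "K x \<noteq> 0" for x y
  proof (rule abs_mult_le_if_K_nonzero[OF _ that])
    show "\<bar>- 2 * (cdf (2 * x - y) + 2 * cdf (2 * y - x) + e)\<bar> \<le> 6 * ?L + 2 * \<bar>e\<bar>"
      using abs_cdf_le[of "2 * x - y"] abs_cdf_le[of "2 * y - x"] by (auto simp: abs_le_iff)
  qed
qed

lemma triple_integral_mid_sgn_sum:
  "(LBINT z. LBINT y. LBINT x. (mid_sgn y x z + mid_sgn z x y + mid_sgn x y z) * x * K x * K y * K z)
    = (LBINT y. LBINT x. (2 * (of_bool (x < y) + cdf y - 2 * cdf (2 * y - x))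
        + (of_bool (y < x) + cdf x - 2 * cdf (2 * x - y))) * x * K x * K y)"
proof -
  define f where "f x y z = (mid_sgn y x z + mid_sgn x y z) * x * K x * K y * K z" for x y z
  define g where "g x y z = mid_sgn y x z * x * K x * K y * K z" for x y z
  have f: "dominated3 f"
    unfolding f_def[abs_def]
  proof (rule dominated3_bounded_factor)
    show "\<bar>(mid_sgn y x z + mid_sgn x y z) * x\<bar> \<le> 2" if "K x \<noteq> 0" for x y z
      using abs_mid_sgn_le_1[of y x z] abs_mid_sgn_le_1[of x y z]
      by (intro abs_mult_le_if_K_nonzero[OF _ that]) linarith
  qed measurable
  have g: "dominated3 g"
    unfolding g_def[abs_def]
    by (rule dominated3_bounded_factor) (auto intro: abs_mult_le_if_K_nonzero abs_mid_sgn_le_1)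
  have "(LBINT z. LBINT y. LBINT x. (mid_sgn y x z + mid_sgn z x y + mid_sgn x y z) * x * K x * K y * K z)
      = (LBINT z. LBINT y. LBINT x. f x y z + g x z y)"
    unfolding f_def g_def by (simp add: algebra_simps)
  also have "\<dots> = (LBINT z. LBINT y. LBINT x. f x y z + g x y z)"
    by (rule triple_integral_add_swap23[OF f g])
  also have "\<dots> = (LBINT y. LBINT x. (2 * (of_bool (x < y) + cdf y - 2 * cdf (2 * y - x))
        + (of_bool (y < x) + cdf x - 2 * cdf (2 * x - y))) * x * K x * K y)"
  proof (rule triple_integral_innermost_AE[OF dominated3_add[OF f g]])
    have inner: "(LBINT z. f x y z + g x y z)
        = x * K x * K y * (LBINT z. (2 * mid_sgn y x z + mid_sgn x y z) * K z)" for x y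
      unfolding f_def g_def by (simp add: algebra_simps flip: integral_mult_right_zero)
    show "AE x in lborel. (LBINT z. f x y z + g x y z) = (2 * (of_bool (x < y) + cdf y - 2 * cdf (2 * y - x))
        + (of_bool (y < x) + cdf x - 2 * cdf (2 * x - y))) * x * K x * K y" for y
      using AE_lborel_singleton[of y] by eventually_elim (simp add: inner integral_mid_sgn_pair)
  qed measurable
  finally show ?thesis .
qed

lemma ordered_sgn_first_moment_integral_eq:
  fixes KK :: "real \<Rightarrow> real"
  assumes KK_anti: "\<And>x y. x \<le> y \<Longrightarrow> KK y - KK x = (LBINT t=x..y. K t)"
  shows "(LBINT (s3::real). LBINT (s2::real). LBINT (s1::real).
        ((of_bool (s1 < s2 \<and> s2 < s3) + of_bool (s3 < s2 \<and> s2 < s1)) * sgn (s3 - 2 *  s2 + s1)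
       + (of_bool (s1 < s3 \<and> s3 < s2) + of_bool (s2 < s3 \<and> s3 < s1)) * sgn (s2 - 2 *  s3 + s1)
       + (of_bool (s2 < s1 \<and> s1 < s3) + of_bool (s3 < s1 \<and> s1 < s2)) * sgn (s3 - 2 *  s1 + s2))
       * s1 * K s1 * K s2 * K s3)
    = - 2 * (LBINT (s2::real). LBINT (s1::real). K s1 * K s2 * (KK (2 *  s1 - s2) + 2 * KK (2 *  s2 - s1)) * s1)"
proof -
  define c where "c = KK 0 - cdf 0"
  have KK: "KK = (\<lambda>x. cdf x + c)"
    unfolding c_def by (rule antiderivative_eq_cdf_plus_const[OF KK_anti])
  define R where "R x y = - 2 * (cdf (2 * x - y) + 2 * cdf (2 * y - x) + 3 * c)" for x y
  define E where "E x y = of_bool (y < x) + 2 * of_bool (x < y) + cdf x + 2 * cdf y + 6 * c" for x y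
  have "(LBINT (s3::real). LBINT (s2::real). LBINT (s1::real).
        ((of_bool (s1 < s2 \<and> s2 < s3) + of_bool (s3 < s2 \<and> s2 < s1)) * sgn (s3 - 2 *  s2 + s1)
       + (of_bool (s1 < s3 \<and> s3 < s2) + of_bool (s2 < s3 \<and> s3 < s1)) * sgn (s2 - 2 *  s3 + s1)
       + (of_bool (s2 < s1 \<and> s1 < s3) + of_bool (s3 < s1 \<and> s1 < s2)) * sgn (s3 - 2 *  s1 + s2))
       * s1 * K s1 * K s2 * K s3)
      = (LBINT z. LBINT y. LBINT x. (mid_sgn y x z + mid_sgn z x y + mid_sgn x y z) * x * K x * K y * K z)"
    unfolding mid_sgn_def by (simp add: algebra_simps)
  also have "\<dots> = (LBINT y. LBINT x. R x y * x * K x * K y + E x y * x * K x * K y)"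
    unfolding triple_integral_mid_sgn_sum R_def E_def by (simp add: algebra_simps)
  also have "\<dots> = (LBINT y. LBINT x. R x y * x * K x * K y)"
    using double_integral_add[OF dominated2_cdf_reflections[of "3 * c"] dominated2_remainder[of "6 * c"]]
      integral_remainder_eq_0[of "6 * c"]
    unfolding R_def E_def by simp
  also have "\<dots> = (LBINT y. LBINT x. - 2 * (K x * K y * (KK (2 * x - y) + 2 * KK (2 * y - x)) * x))"
    unfolding R_def KK by (intro Bochner_Integration.integral_cong refl) (simp add: algebra_simps)
  also have "\<dots> = - 2 * (LBINT y. LBINT x. K x * K y * (KK (2 *  x - y) + 2 * KK (2 *  y - x)) * x)"
    by simp
  finally show ?thesis .
qed

end

theorem lemma4:
  fixes K KK :: "real \<Rightarrow> real"
  assumes K_int: "integrable lborel K"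
    and K_sym: "\<And>s. K (- s) = K s"
    and K_one: "(LBINT s. K s) = 1"
    and K_supp: "\<And>s. \<bar>s\<bar> > 1 \<Longrightarrow> K s = 0"
    and KK_anti: "\<And>x y. x \<le> y \<Longrightarrow> KK y - KK x = (LBINT t=x..y. K t)"
  shows
   "(LBINT (s3::real). LBINT (s2::real). LBINT (s1::real).
        of_bool (s1 < s2 \<and> s2 < s3) * sgn (s3 - 2 *  s2 + s1) * K s1 * K s2 * K s3) = 0
    \<and>
    (LBINT (s3::real). LBINT (s2::real). LBINT (s1::real).
        ((of_bool (s1 < s2 \<and> s2 < s3) + of_bool (s3 < s2 \<and> s2 < s1)) * sgn (s3 - 2 *  s2 + s1)
       + (of_bool (s1 < s3 \<and> s3 < s2) + of_bool (s2 < s3 \<and> s3 < s1)) * sgn (s2 - 2 *  s3 + s1)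
       + (of_bool (s2 < s1 \<and> s1 < s3) + of_bool (s3 < s1 \<and> s1 < s2)) * sgn (s3 - 2 *  s1 + s2))
       * s1 * K s1 * K s2 * K s3)
    = - 2 * (LBINT (s2::real). LBINT (s1::real). K s1 * K s2 * (KK (2 *  s1 - s2) + 2 * KK (2 *  s2 - s1)) * s1)
    \<and>
    (\<forall>k\<in>{1::nat,2,3}. \<forall>l\<in>{1::nat,2,3}.
      (LBINT (s3::real). LBINT (s2::real). LBINT (s1::real).
        (of_bool (s1 < s2 \<and> s2 < s3) + of_bool (s3 < s2 \<and> s2 < s1)) * sgn (s3 - 2 *  s2 + s1)
        * ([s1,s2,s3] ! (k - 1)) * ([s1,s2,s3] ! (l - 1)) * K s1 * K s2 * K s3) = 0)"
proof -
  interpret symmetric_kernel K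
    using K_int K_sym K_supp K_one by unfold_locales auto
  show ?thesis
    using ordered_sgn_integral_eq_0[OF K_sym] ordered_sgn_first_moment_integral_eq[OF KK_anti]
      ordered_sgn_second_moment_integral_eq_0[of K, OF K_sym] by blast
qed

end
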